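(* Let $0<q\le1\le p\le2$, let $A\in\mathbb{R}^{m\times n}$, let $\bar{x}\in\mathbb{R}^n$ have exactly $S\ge1$ nonzero groups, let $\mathcal{S}:=\{i:\bar{x}_{\mathcal{G}_i}\ne0\}$, and set $b:=A\bar{x}$. Suppose the $(p,q)$-GREC$(S,S)$ holds. Let $K$ be the smallest integer with $2^{K-1}q\ge1$. Then for every $x^*\in{\rm lev}_F(\bar{x}):=\{x:\|Ax-b\|_2^2+\lambda\|x\|_{p,q}^q\le\lambda\|\bar{x}\|_{p,q}^q\}$ (where $\lambda>0$), $$\|Ax^*-A\bar{x}\|_2^2+\lambda\|x^*_{\mathcal{G}_{\mathcal{S}^c}}\|_{p,q}^q\le\lambda^{\frac{2}{2-q}}S^{(1-2^{-K})\frac{2}{2-q}}\big/\phi_{p,q}^{\frac{2q}{2-q}}(S,S),$$ and, with $\mathcal{N}_*:=\mathcal{S}\cup\mathcal{S}(x^*;S)$, $$\|x^*_{\mathcal{G}_{\mathcal{N}_*}}-\bar{x}_{\mathcal{G}_{\mathcal{N}_*}}\|_{p,2}^2\le\lambda^{\frac{2}{2-q}}S^{(1-2^{-K})\frac{2}{2-q}}\big/\phi_{p,q}^{\frac{4}{2-q}}(S,S).$$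
   Context: Group structure: $\{1,\dots,n\}$ is partitioned into disjoint nonempty index sets $\mathcal{G}_1,\dots,\mathcal{G}_r$; $x_{\mathcal{G}_i}$ is the subvector indexed by $\mathcal{G}_i$. For $\mathcal{J}\subseteq\{1,\dots,r\}$, $\|x_{\mathcal{G}_{\mathcal{J}}}\|_{p,q}:=(\sum_{i\in\mathcal{J}}\|x_{\mathcal{G}_i}\|_p^q)^{1/q}$ and $\|x\|_{p,q}:=\|x_{\mathcal{G}_{\{1,\dots,r\}}}\|_{p,q}$; $x_{\mathcal{G}_{\mathcal{J}}}$ denotes the subvector indexed by $\bigcup_{i\in\mathcal{J}}\mathcal{G}_i$. For $\mathcal{J}\subseteq\{1,\dots,r\}$ and integer $N$, $\mathcal{J}(x;N)$ is the set of the $N$ indices $i\in\mathcal{J}^c$ with the largest $\|x_{\mathcal{G}_i}\|_p$ (ties broken arbitrarily; all of $\mathcal{J}^c$ if it has fewer than $N$ elements). Group restricted eigenvalue: $\phi_{p,q}(S,N):=\inf\{\|Ax\|_2/\|x_{\mathcal{G}_{\mathcal{N}}}\|_{p,2}: x\ne0,\ |\mathcal{J}|\le S,\ \|x_{\mathcal{G}_{\mathcal{J}^c}}\|_{p,q}\le\|x_{\mathcal{G}_{\mathcal{J}}}\|_{p,q},\ \mathcal{N}=\mathcal{J}(x;N)\cup\mathcal{J}\}$; the $(p,q)$-GREC$(S,N)$ holds if $\phi_{p,q}(S,N)>0$. *)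

theory Defs
  imports "HOL-Analysis.Analysis"
begin

definition group_partition :: "nat \<Rightarrow> (nat \<Rightarrow> 'n set) \<Rightarrow> bool" where
  "group_partition r G \<longleftrightarrow>
     (\<forall>i\<in>{1..r}. G i \<noteq> {}) \<and>
     (\<forall>i\<in>{1..r}. \<forall>j\<in>{1..r}. i \<noteq> j \<longrightarrow> G i \<inter> G j = {}) \<and>
     (\<Union>i\<in>{1..r}. G i) = UNIV"

definition gnorm :: "real \<Rightarrow> 'n::finite set \<Rightarrow> real ^ 'n \<Rightarrow> real" where
  "gnorm p I x = (\<Sum>j\<in>I. \<bar>x $ j\<bar> powr p) powr (1 / p)"

definition mixnorm :: "real \<Rightarrow> real \<Rightarrow> (nat \<Rightarrow> 'n::finite set) \<Rightarrow> real ^ 'n \<Rightarrow> nat set \<Rightarrow> real" where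
  "mixnorm p q G x J = (\<Sum>i\<in>J. gnorm p (G i) x powr q) powr (1 / q)"

text \<open>T is an admissible choice of J(x;N): the N indices of J^c (complement in 1..r)
  with largest group p-norm (ties broken arbitrarily; all of J^c if it has fewer than N elements).\<close>
definition is_topN :: "real \<Rightarrow> (nat \<Rightarrow> 'n::finite set) \<Rightarrow> nat \<Rightarrow> real ^ 'n \<Rightarrow> nat set \<Rightarrow> nat \<Rightarrow> nat set \<Rightarrow> bool" where
  "is_topN p G r x J N T \<longleftrightarrow>
     T \<subseteq> {1..r} - J \<and> card T = min N (card ({1..r} - J)) \<and>
     (\<forall>i\<in>T. \<forall>j\<in>({1..r} - J) - T. gnorm p (G j) x \<le> gnorm p (G i) x)"

definition grec_phi :: "real \<Rightarrow> real \<Rightarrow> (nat \<Rightarrow> 'n::finite set) \<Rightarrow> nat \<Rightarrow> real ^ 'n ^ 'm \<Rightarrow> nat \<Rightarrow> nat \<Rightarrow> real" where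
  "grec_phi p q G r A S N = Inf {norm (A *v x) / mixnorm p 2 G x (T \<union> J) | x J T.
      x \<noteq> 0 \<and> J \<subseteq> {1..r} \<and> card J \<le> S \<and>
      mixnorm p q G x ({1..r} - J) \<le> mixnorm p q G x J \<and> is_topN p G r x J N T}"

end

theory Submission
  imports Defs
begin

text \<open>Write h = xstar - xbar and L for the left-hand side of the first bound. As xbar vanishes
  off the groups in Sset, membership in the level set and the group-wise triangle inequality for
  q-th powers give the basic inequality L \<le> \<lambda> ||h_Sset||_{p,q}^q; dropping ||A h||^2 from it puts h
  in the GREC cone, so \<phi> ||h_N||_{p,2} \<le> ||A h|| for N = Sset \<union> T. The power-mean inequality
  ||h_Sset||_{p,q}^q \<le> S^(1-q/2) ||h_N||_{p,2}^q then yields ||A h||^2 \<le> L \<le> c ||A h||^q with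
  c = \<lambda> S^(1-q/2) / \<phi>^q, hence L \<le> c^(2/(2-q)). So both bounds hold with the factor S, which is at
  most the stated S^((1-2^-K) 2/(2-q)) because 2^-K \<le> q/2.\<close>

lemma powr_add_le_add_powr:
  fixes a b q :: real
  assumes "0 < q" "q \<le> 1" "0 \<le> a" "0 \<le> b"
  shows "(a + b) powr q \<le> a powr q + b powr q"
proof (cases "a + b = 0")
  case True
  with assms show ?thesis by simp
next
  case False
  define s where "s = a + b"
  have s: "s > 0" using False assms s_def by auto
  have frac: "u / s \<le> u powr q / s powr q" if "0 \<le> u" "u \<le> s" for u
  proof -
    have "u / s \<le> (u / s) powr q"
      using powr_mono'[of q 1 "u / s"] assms s that by simp
    also have "\<dots> = u powr q / s powr q" using that s by (simp add: powr_divide)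
    finally show ?thesis .
  qed
  have "1 = a / s + b / s" using s by (simp add: s_def add_divide_distrib[symmetric])
  also have "\<dots> \<le> (a powr q + b powr q) / s powr q"
    using frac[of a] frac[of b] assms by (simp add: s_def add_divide_distrib)
  finally show ?thesis using s by (simp add: s_def le_divide_eq)
qed

lemma powr_convex_combination_le:
  fixes p t x y :: real
  assumes "1 \<le> p" "0 \<le> t" "t \<le> 1" "0 \<le> x" "0 \<le> y"
  shows "((1 - t) * x + t * y) powr p \<le> (1 - t) * x powr p + t * y powr p"
proof -
  have shrink: "(s * z) powr p \<le> s * z powr p" if "0 \<le> s" "s \<le> 1" "0 \<le> z" for s z :: real
  proof -
    have "s powr p \<le> s" using powr_mono'[of 1 p s] that assms by simp
    then show ?thesis using that by (simp add: powr_mult mult_right_mono)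
  qed
  consider "x = 0" | "y = 0" | "x > 0" "y > 0" using assms by linarith
  then show ?thesis
  proof cases
    case 1
    then show ?thesis using shrink[of t y] assms by simp
  next
    case 2
    then show ?thesis using shrink[of "1 - t" x] assms by simp
  next
    case 3
    then show ?thesis
      using convex_onD[OF powr_convex[OF assms(1)], of t x y] assms by simp
  qed
qed

text \<open>Convexity of \<open>t \<mapsto> t powr p\<close> in homogeneous form; with \<open>A, B\<close> the p-norms of two vectors,
  summing it over the coordinates gives Minkowski's inequality.\<close>
lemma powr_add_le_weighted:
  fixes p u v A B :: real
  assumes "1 \<le> p" "0 < A" "0 < B" "0 \<le> u" "0 \<le> v"
  shows "(u + v) powr p \<le> (A + B) powr (p - 1) * (u powr p / A powr (p - 1) + v powr p / B powr (p - 1))"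
proof -
  define t where "t = B / (A + B)"
  have t: "0 \<le> t" "t \<le> 1" "1 - t = A / (A + B)" using assms by (auto simp: t_def field_simps)
  have "(1 - t) * (u / A) = u / (A + B)" "t * (v / B) = v / (A + B)"
    using assms by (simp_all only: t(3) t_def) (simp_all add: field_simps)
  then have "u + v = (A + B) * ((1 - t) * (u / A) + t * (v / B))"
    using assms by (simp add: add_divide_distrib[symmetric])
  then have "(u + v) powr p = (A + B) powr p * ((1 - t) * (u / A) + t * (v / B)) powr p"
    using assms t by (simp add: powr_mult)
  also have "\<dots> \<le> (A + B) powr p * ((1 - t) * (u / A) powr p + t * (v / B) powr p)"
    using powr_convex_combination_le[of p t "u / A" "v / B"] assms t by (intro mult_left_mono) auto
  also have "\<dots> = (A + B) powr (p - 1) * (u powr p / A powr (p - 1) + v powr p / B powr (p - 1))"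
  proof -
    have scale: "z * (w / z) powr p = w powr p / z powr (p - 1)" if "z > 0" for z w :: real
      using that by (simp add: powr_divide powr_diff)
    have "(A + B) powr p = (A + B) powr (p - 1) * (A + B)"
      using assms by (simp add: powr_diff)
    then have "(A + B) powr p * ((1 - t) * X + t * Y)
        = (A + B) powr (p - 1) * (((A + B) * (1 - t)) * X + ((A + B) * t) * Y)" for X Y
      by (simp add: algebra_simps)
    moreover have "(A + B) * (1 - t) = A" "(A + B) * t = B"
      using assms by (simp_all add: t_def field_simps)
    ultimately show ?thesis using assms by (simp add: scale)
  qed
  finally show ?thesis .
qed

lemma Minkowski_ineq:
  fixes a b :: "'i \<Rightarrow> real" and p :: real
  assumes "1 \<le> p" "finite I"
  shows "(\<Sum>j\<in>I. \<bar>a j + b j\<bar> powr p) powr (1/p)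
    \<le> (\<Sum>j\<in>I. \<bar>a j\<bar> powr p) powr (1/p) + (\<Sum>j\<in>I. \<bar>b j\<bar> powr p) powr (1/p)"
proof -
  define SA SB where "SA = (\<Sum>j\<in>I. \<bar>a j\<bar> powr p)" and "SB = (\<Sum>j\<in>I. \<bar>b j\<bar> powr p)"
  define NA NB where "NA = SA powr (1/p)" and "NB = SB powr (1/p)"
  have SA_SB: "0 \<le> SA" "0 \<le> SB" by (simp_all add: SA_def SB_def sum_nonneg)
  have NA_NB: "NA powr p = SA" "NB powr p = SB"
    using SA_SB assms(1) by (simp_all add: NA_def NB_def powr_powr)
  consider "SA = 0" | "SB = 0" | "NA > 0" "NB > 0"
    using SA_SB by (fastforce simp: NA_def NB_def)
  then show ?thesis
  proof cases
    case 1
    then have "\<forall>j\<in>I. a j = 0" using assms(2) by (simp add: SA_def sum_nonneg_eq_0_iff)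
    then show ?thesis by simp
  next
    case 2
    then have "\<forall>j\<in>I. b j = 0" using assms(2) by (simp add: SB_def sum_nonneg_eq_0_iff)
    then show ?thesis by simp
  next
    case 3
    have "(\<Sum>j\<in>I. \<bar>a j + b j\<bar> powr p) \<le> (\<Sum>j\<in>I. (\<bar>a j\<bar> + \<bar>b j\<bar>) powr p)"
      using assms by (intro sum_mono powr_mono2) auto
    also have "\<dots> \<le> (\<Sum>j\<in>I. (NA + NB) powr (p - 1)
        * (\<bar>a j\<bar> powr p / NA powr (p - 1) + \<bar>b j\<bar> powr p / NB powr (p - 1)))"
      using 3 assms by (intro sum_mono powr_add_le_weighted) auto
    also have "\<dots> = (NA + NB) powr (p - 1) * (SA / NA powr (p - 1) + SB / NB powr (p - 1))"
      unfolding SA_def SB_def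
      by (simp only: sum_distrib_left[symmetric] sum.distrib sum_divide_distrib[symmetric])
    also have "\<dots> = (NA + NB) powr (p - 1) * (NA + NB)"
      using 3 by (simp add: flip: NA_NB powr_diff)
    also have "\<dots> = (NA + NB) powr p"
      using 3 by (simp add: powr_diff)
    finally have "(\<Sum>j\<in>I. \<bar>a j + b j\<bar> powr p) powr (1/p) \<le> ((NA + NB) powr p) powr (1/p)"
      using assms by (intro powr_mono2) (auto intro: sum_nonneg)
    also have "\<dots> = NA + NB" using 3 assms by (simp add: powr_powr)
    finally show ?thesis by (simp add: NA_def NB_def SA_def SB_def)
  qed
qed

lemma sum_powr_le_card_powr_sum:
  fixes x :: "'i \<Rightarrow> real" and \<alpha> :: real
  assumes "finite I" "0 < \<alpha>" "\<alpha> \<le> 1" "\<And>i. i \<in> I \<Longrightarrow> x i \<ge> 0"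
  shows "(\<Sum>i\<in>I. x i powr \<alpha>) \<le> real (card I) powr (1 - \<alpha>) * (\<Sum>i\<in>I. x i) powr \<alpha>"
proof (cases "(\<Sum>i\<in>I. x i) = 0")
  case True
  then have "\<forall>i\<in>I. x i = 0" using assms by (simp add: sum_nonneg_eq_0_iff)
  then show ?thesis by simp
next
  case False
  define n where "n = real (card I)"
  define c where "c = (\<Sum>i\<in>I. x i) / n"
  have n: "n > 0" using False assms(1) by (auto simp: n_def card_gt_0_iff)
  have c: "c > 0" using False n assms by (simp add: c_def order_le_neq_trans sum_nonneg)
  text \<open>Young's inequality against the mean \<open>c\<close>.\<close>
  have Young: "x i powr \<alpha> \<le> c powr (\<alpha> - 1) * (\<alpha> * x i + (1 - \<alpha>) * c)" if "i \<in> I" for i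
  proof (cases "x i = 0")
    case True
    then show ?thesis using assms c by simp
  next
    case False
    then have "x i powr \<alpha> * c powr (1 - \<alpha>) \<le> \<alpha> * x i + (1 - \<alpha>) * c"
      using Youngs_inequality_0[of \<alpha> "1 - \<alpha>" "x i" c] assms that c by force
    then show ?thesis using c by (simp add: powr_diff field_simps)
  qed
  have "(\<Sum>i\<in>I. x i powr \<alpha>) \<le> (\<Sum>i\<in>I. c powr (\<alpha> - 1) * (\<alpha> * x i + (1 - \<alpha>) * c))"
    by (intro sum_mono Young)
  also have "\<dots> = c powr (\<alpha> - 1) * (\<alpha> * (n * c) + (1 - \<alpha>) * (n * c))"
    using n by (simp add: c_def n_def sum_distrib_left sum.distrib flip: sum_distrib_left)
  also have "\<dots> = n * c powr \<alpha>"
    using c by (simp add: powr_diff field_simps)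
  also have "\<dots> = n powr (1 - \<alpha>) * (\<Sum>i\<in>I. x i) powr \<alpha>"
    using n False assms by (simp add: c_def powr_divide powr_diff sum_nonneg)
  finally show ?thesis unfolding n_def .
qed

lemma le_powr_if_sq_le_le_mult_powr:
  fixes q c D L :: real
  assumes "0 < q" "q < 2" "0 < c" "0 \<le> D" "D\<^sup>2 \<le> L" "L \<le> c * D powr q"
  shows "L \<le> c powr (2 / (2 - q))"
proof (cases "D = 0")
  case True
  then show ?thesis using assms by simp
next
  case False
  then have D: "D > 0" using assms by simp
  have "D powr 2 \<le> c * D powr q" using assms D by (simp add: powr_numeral)
  then have "D powr (2 - q) \<le> c" using D by (simp add: powr_diff divide_le_eq mult.commute)
  then have "(D powr (2 - q)) powr (q / (2 - q)) \<le> c powr (q / (2 - q))"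
    using assms D by (intro powr_mono2) auto
  then have "D powr q \<le> c powr (q / (2 - q))"
    using assms by (simp add: powr_powr)
  then have "c * D powr q \<le> c * c powr (q / (2 - q))"
    using assms by (intro mult_left_mono) auto
  with assms(6) have "L \<le> c * c powr (q / (2 - q))"
    by (rule order_trans)
  also have "\<dots> = c powr (1 + q / (2 - q))"
    using assms by (simp add: powr_add)
  also have "1 + q / (2 - q) = 2 / (2 - q)"
    using assms by (simp add: field_simps)
  finally show ?thesis .
qed

text \<open>Here \<open>D\<close>, \<open>L\<close>, \<open>M\<close> stand for ||A h||, the left-hand side of the basic inequality and
  ||h_N||_{p,2}.\<close>
lemma bounds_from_sq_le_le_mult_powr:
  fixes q lambda phi s D L M :: real
  assumes "0 < q" "q < 2" "0 < lambda" "0 < phi" "0 < s" "0 \<le> M"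
    and "D\<^sup>2 \<le> L" "L \<le> lambda * (s powr (1 - q/2) * M powr q)" "phi * M \<le> D"
  shows "L \<le> lambda powr (2 / (2 - q)) * s / phi powr (2 * q / (2 - q))"
    and "M\<^sup>2 \<le> lambda powr (2 / (2 - q)) * s / phi powr (4 / (2 - q))"
proof -
  define c where "c = lambda * s powr (1 - q/2) / phi powr q"
  have M_le: "M \<le> D / phi" using assms by (simp add: field_simps)
  have D: "0 \<le> D" using assms(4,6,9) mult_nonneg_nonneg[of phi M] by linarith
  have "s powr (1 - q/2) * M powr q \<le> s powr (1 - q/2) * (D / phi) powr q"
    using assms M_le by (intro mult_left_mono powr_mono2) auto
  then have "L \<le> lambda * (s powr (1 - q/2) * (D / phi) powr q)"
    using assms(3,8) by (meson mult_left_mono less_imp_le order_trans)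
  also have "\<dots> = c * D powr q"
    using assms D by (simp add: c_def powr_divide)
  finally have "L \<le> c powr (2 / (2 - q))"
    using assms D by (intro le_powr_if_sq_le_le_mult_powr) (auto simp: c_def)
  also have "\<dots> = lambda powr (2 / (2 - q)) * s / phi powr (2 * q / (2 - q))"
    using assms by (simp add: c_def powr_divide powr_mult powr_powr mult.commute)
  finally show L: "L \<le> lambda powr (2 / (2 - q)) * s / phi powr (2 * q / (2 - q))" .
  have "M\<^sup>2 \<le> (D / phi)\<^sup>2"
    using M_le assms by (intro power_mono) auto
  also have "\<dots> \<le> L / phi\<^sup>2"
    using assms by (simp add: power_divide divide_right_mono)
  also have "\<dots> \<le> lambda powr (2 / (2 - q)) * s / phi powr (2 * q / (2 - q)) / phi\<^sup>2"
    using L by (rule divide_right_mono) simp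
  also have "\<dots> = lambda powr (2 / (2 - q)) * s / phi powr (4 / (2 - q))"
  proof -
    have "4 / (2 - q) = 2 * q / (2 - q) + 2" using assms by (simp add: field_simps)
    then show ?thesis using assms by (simp add: powr_add)
  qed
  finally show "M\<^sup>2 \<le> lambda powr (2 / (2 - q)) * s / phi powr (4 / (2 - q))" .
qed

lemma two_powr_neg_le_half_mult:
  fixes k q :: real
  assumes "1 \<le> 2 powr (k - 1) * q"
  shows "2 powr (- k) \<le> q / 2"
proof -
  have "2 powr (- k) \<le> 2 powr (- k) * (2 powr (k - 1) * q)"
    using assms by (simp add: mult_le_cancel_left1)
  also have "\<dots> = 2 powr (- k + (k - 1)) * q"
    by (simp only: powr_add mult.assoc)
  finally show ?thesis by (simp add: powr_minus_divide)
qed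

lemma gnorm_nonneg [simp]: "0 \<le> gnorm p I x"
  unfolding gnorm_def by simp

lemma mixnorm_nonneg [simp]: "0 \<le> mixnorm p q G x J"
  unfolding mixnorm_def by simp

lemma mixnorm_powr: "0 < q \<Longrightarrow> mixnorm p q G x J powr q = (\<Sum>i\<in>J. gnorm p (G i) x powr q)"
  unfolding mixnorm_def by (simp add: powr_powr sum_nonneg)

lemma gnorm_cong: "(\<And>j. j \<in> I \<Longrightarrow> x $ j = y $ j) \<Longrightarrow> gnorm p I x = gnorm p I y"
  unfolding gnorm_def by simp

lemma gnorm_diff_eq_if_vanishing: "(\<And>j. j \<in> I \<Longrightarrow> y $ j = 0) \<Longrightarrow> gnorm p I (x - y) = gnorm p I x"
  by (rule gnorm_cong) simp

lemma gnorm_zero: "gnorm p I 0 = 0"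
  unfolding gnorm_def by simp

lemma mixnorm_zero: "mixnorm p q G 0 J = 0"
  unfolding mixnorm_def by (simp add: gnorm_zero)

lemma gnorm_diff_le:
  assumes "1 \<le> p"
  shows "gnorm p I (u - v) \<le> gnorm p I u + gnorm p I v"
  using Minkowski_ineq[OF assms finite, of "\<lambda>j. u $ j" "\<lambda>j. - v $ j"]
  unfolding gnorm_def by simp

lemma gnorm_powr_le_add:
  assumes "1 \<le> p" "0 < q" "q \<le> 1"
  shows "gnorm p I x powr q \<le> gnorm p I y powr q + gnorm p I (y - x) powr q"
proof -
  have "gnorm p I x \<le> gnorm p I y + gnorm p I (y - x)"
    using gnorm_diff_le[OF assms(1), of I y "y - x"] by simp
  then have "gnorm p I x powr q \<le> (gnorm p I y + gnorm p I (y - x)) powr q"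
    using assms by (intro powr_mono2) auto
  also have "\<dots> \<le> gnorm p I y powr q + gnorm p I (y - x) powr q"
    using assms by (intro powr_add_le_add_powr) auto
  finally show ?thesis .
qed

lemma is_topN_cong:
  assumes "\<And>i. i \<in> {1..r} - J \<Longrightarrow> gnorm p (G i) x = gnorm p (G i) y"
  shows "is_topN p G r x J N T \<longleftrightarrow> is_topN p G r y J N T"
  unfolding is_topN_def using assms by (auto simp: subset_iff)

lemma mixnorm_powr_le_card_mixnorm2:
  assumes "finite J'" "J \<subseteq> J'" "0 < q" "q \<le> 1"
  shows "mixnorm p q G x J powr q \<le> real (card J) powr (1 - q/2) * mixnorm p 2 G x J' powr q"
proof -
  have finJ: "finite J" using assms finite_subset by blast
  have "mixnorm p q G x J powr q = (\<Sum>i\<in>J. (gnorm p (G i) x powr 2) powr (q/2))"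
    using assms by (simp only: mixnorm_powr powr_powr) simp
  also have "\<dots> \<le> real (card J) powr (1 - q/2) * (\<Sum>i\<in>J. gnorm p (G i) x powr 2) powr (q/2)"
    using assms finJ by (intro sum_powr_le_card_powr_sum) auto
  also have "\<dots> \<le> real (card J) powr (1 - q/2) * (\<Sum>i\<in>J'. gnorm p (G i) x powr 2) powr (q/2)"
    using assms by (intro mult_left_mono powr_mono2 sum_mono2) (auto intro: sum_nonneg)
  also have "\<dots> = real (card J) powr (1 - q/2) * mixnorm p 2 G x J' powr q"
    by (simp add: mixnorm_def powr_powr)
  finally show ?thesis .
qed

text \<open>When the restricted norm vanishes the claim is trivial (the quotient in the infimum would be a
  junk \<open>x / 0 = 0\<close>); otherwise \<open>h\<close> is one of the vectors over which the infimum is taken.\<close>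
lemma grec_phi_mult_le:
  assumes "J \<subseteq> {1..r}" "card J \<le> S"
    and "mixnorm p q G h ({1..r} - J) \<le> mixnorm p q G h J"
    and "is_topN p G r h J N T"
  shows "grec_phi p q G r A S N * mixnorm p 2 G h (T \<union> J) \<le> norm (A *v h)"
proof (cases "mixnorm p 2 G h (T \<union> J) = 0")
  case False
  let ?ratios = "{norm (A *v x) / mixnorm p 2 G x (T \<union> J) | x J T.
      x \<noteq> 0 \<and> J \<subseteq> {1..r} \<and> card J \<le> S \<and>
      mixnorm p q G x ({1..r} - J) \<le> mixnorm p q G x J \<and> is_topN p G r x J N T}"
  have "h \<noteq> 0" using False by (auto simp: mixnorm_zero)
  then have "norm (A *v h) / mixnorm p 2 G h (T \<union> J) \<in> ?ratios"
    using assms by blast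
  moreover have "bdd_below ?ratios"
    by (rule bdd_belowI[of _ 0]) auto
  ultimately have "grec_phi p q G r A S N \<le> norm (A *v h) / mixnorm p 2 G h (T \<union> J)"
    unfolding grec_phi_def by (rule cInf_lower)
  then show ?thesis
    using False by (simp add: le_divide_eq order_le_neq_trans)
qed simp

lemma level_set_basic_ineq:
  assumes "Sset \<subseteq> {1..r}" "\<And>i j. i \<in> {1..r} - Sset \<Longrightarrow> j \<in> G i \<Longrightarrow> xbar $ j = 0"
    and "1 \<le> p" "0 < q" "q \<le> 1" "0 \<le> lambda"
    and "(norm (A *v xstar - A *v xbar))\<^sup>2 + lambda * mixnorm p q G xstar {1..r} powr q
          \<le> lambda * mixnorm p q G xbar {1..r} powr q"
  shows "(norm (A *v xstar - A *v xbar))\<^sup>2 + lambda * mixnorm p q G xstar ({1..r} - Sset) powr q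
          \<le> lambda * mixnorm p q G (xstar - xbar) Sset powr q"
proof -
  let ?R = "{1..r} - Sset"
  let ?g = "\<lambda>x i. gnorm p (G i) x powr q"
  have split: "(\<Sum>i\<in>{1..r}. f i) = (\<Sum>i\<in>?R. f i) + (\<Sum>i\<in>Sset. f i)" for f :: "nat \<Rightarrow> real"
    using assms(1) by (rule sum.subset_diff) simp
  have outside: "(\<Sum>i\<in>?R. ?g xbar i) = 0"
    using assms(2,4) by (simp add: gnorm_cong[of _ xbar 0] gnorm_zero)
  have "(\<Sum>i\<in>Sset. ?g xbar i) \<le> (\<Sum>i\<in>Sset. ?g xstar i) + (\<Sum>i\<in>Sset. ?g (xstar - xbar) i)"
    using assms(3-5) by (simp only: sum.distrib[symmetric]) (intro sum_mono gnorm_powr_le_add)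
  then have "lambda * (\<Sum>i\<in>Sset. ?g xbar i)
      \<le> lambda * ((\<Sum>i\<in>Sset. ?g xstar i) + (\<Sum>i\<in>Sset. ?g (xstar - xbar) i))"
    using assms(6) by (rule mult_left_mono)
  moreover have "(norm (A *v xstar - A *v xbar))\<^sup>2
      + lambda * ((\<Sum>i\<in>?R. ?g xstar i) + (\<Sum>i\<in>Sset. ?g xstar i))
      \<le> lambda * ((\<Sum>i\<in>?R. ?g xbar i) + (\<Sum>i\<in>Sset. ?g xbar i))"
    using assms(7) unfolding mixnorm_powr[OF assms(4)] split .
  ultimately show ?thesis
    using outside by (simp add: mixnorm_powr[OF assms(4)] algebra_simps)
qed

lemma level_set_cone:
  assumes "Sset \<subseteq> {1..r}" "\<And>i j. i \<in> {1..r} - Sset \<Longrightarrow> j \<in> G i \<Longrightarrow> xbar $ j = 0"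
    and "1 \<le> p" "0 < q" "q \<le> 1" "0 < lambda"
    and "(norm (A *v xstar - A *v xbar))\<^sup>2 + lambda * mixnorm p q G xstar {1..r} powr q
          \<le> lambda * mixnorm p q G xbar {1..r} powr q"
  shows "mixnorm p q G (xstar - xbar) ({1..r} - Sset) \<le> mixnorm p q G (xstar - xbar) Sset"
proof -
  let ?h = "xstar - xbar"
  have "gnorm p (G i) ?h = gnorm p (G i) xstar" if "i \<in> {1..r} - Sset" for i
    using assms(2)[OF that] by (rule gnorm_diff_eq_if_vanishing)
  then have "mixnorm p q G ?h ({1..r} - Sset) = mixnorm p q G xstar ({1..r} - Sset)"
    unfolding mixnorm_def by simp
  moreover have "(norm (A *v xstar - A *v xbar))\<^sup>2 + lambda * mixnorm p q G xstar ({1..r} - Sset) powr q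
      \<le> lambda * mixnorm p q G ?h Sset powr q"
    using assms by (intro level_set_basic_ineq) auto
  ultimately have "lambda * mixnorm p q G ?h ({1..r} - Sset) powr q \<le> lambda * mixnorm p q G ?h Sset powr q"
    by (smt (verit) zero_le_power2)
  then have "mixnorm p q G ?h ({1..r} - Sset) powr q \<le> mixnorm p q G ?h Sset powr q"
    using assms(6) by simp
  then show ?thesis
    using powr_less_mono2[OF assms(4) mixnorm_nonneg[of p q G ?h Sset], of "mixnorm p q G ?h ({1..r} - Sset)"]
    by linarith
qed

lemma level_set_error_bounds:
  assumes "Sset \<subseteq> {1..r}" "\<And>i j. i \<in> {1..r} - Sset \<Longrightarrow> j \<in> G i \<Longrightarrow> xbar $ j = 0"
    and "card Sset = S" "1 \<le> S"
    and "1 \<le> p" "0 < q" "q \<le> 1" "0 < lambda" "0 < grec_phi p q G r A S S"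
    and lev: "(norm (A *v xstar - A *v xbar))\<^sup>2 + lambda * mixnorm p q G xstar {1..r} powr q
          \<le> lambda * mixnorm p q G xbar {1..r} powr q"
    and T: "is_topN p G r xstar Sset S T"
  shows "(norm (A *v xstar - A *v xbar))\<^sup>2 + lambda * mixnorm p q G xstar ({1..r} - Sset) powr q
           \<le> lambda powr (2 / (2 - q)) * real S / grec_phi p q G r A S S powr (2 * q / (2 - q))"
    and "(mixnorm p 2 G (xstar - xbar) (Sset \<union> T))\<^sup>2
           \<le> lambda powr (2 / (2 - q)) * real S / grec_phi p q G r A S S powr (4 / (2 - q))"
proof -
  let ?h = "xstar - xbar"
  let ?L = "(norm (A *v xstar - A *v xbar))\<^sup>2 + lambda * mixnorm p q G xstar ({1..r} - Sset) powr q"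
  let ?M = "mixnorm p 2 G ?h (Sset \<union> T)"
  have "gnorm p (G i) ?h = gnorm p (G i) xstar" if "i \<in> {1..r} - Sset" for i
    using assms(2)[OF that] by (rule gnorm_diff_eq_if_vanishing)
  then have "is_topN p G r ?h Sset S T"
    using T is_topN_cong[of r Sset p G ?h xstar] by blast
  moreover have "mixnorm p q G ?h ({1..r} - Sset) \<le> mixnorm p q G ?h Sset"
    using assms by (intro level_set_cone) auto
  ultimately have "grec_phi p q G r A S S * ?M \<le> norm (A *v ?h)"
    unfolding Un_commute[of Sset] using assms(1,3) by (intro grec_phi_mult_le) auto
  then have grec: "grec_phi p q G r A S S * ?M \<le> norm (A *v xstar - A *v xbar)"
    by (simp add: matrix_vector_mult_diff_distrib)
  have "finite (Sset \<union> T)"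
    using assms(1) T unfolding is_topN_def by (auto intro: finite_subset)
  then have "mixnorm p q G ?h Sset powr q \<le> real S powr (1 - q/2) * ?M powr q"
    unfolding assms(3)[symmetric] using assms(6,7) by (intro mixnorm_powr_le_card_mixnorm2) auto
  then have "lambda * mixnorm p q G ?h Sset powr q \<le> lambda * (real S powr (1 - q/2) * ?M powr q)"
    using assms(8) by (intro mult_left_mono) auto
  moreover have "?L \<le> lambda * mixnorm p q G ?h Sset powr q"
    using assms by (intro level_set_basic_ineq) auto
  ultimately have L_le: "?L \<le> lambda * (real S powr (1 - q/2) * ?M powr q)"
    by (rule order_trans[rotated])
  have D_le: "(norm (A *v xstar - A *v xbar))\<^sup>2 \<le> ?L"
    using assms(8) by simp
  have "q < 2" "0 < real S" using assms(4,7) by auto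
  from bounds_from_sq_le_le_mult_powr[OF assms(6) this(1) assms(8,9) this(2) mixnorm_nonneg D_le L_le grec]
  show "?L \<le> lambda powr (2 / (2 - q)) * real S / grec_phi p q G r A S S powr (2 * q / (2 - q))"
    and "?M\<^sup>2 \<le> lambda powr (2 / (2 - q)) * real S / grec_phi p q G r A S S powr (4 / (2 - q))" .
qed

theorem proposition2p2:
  fixes A :: "real ^ 'n ^ 'm" and xbar xstar :: "real ^ 'n"
    and G :: "nat \<Rightarrow> 'n set" and r :: nat
    and p q lambda :: real and S :: nat and K :: int and Sset T :: "nat set"
  assumes part: "group_partition r G"
    and q: "0 < q" "q \<le> 1" and p: "1 \<le> p" "p \<le> 2"
    and Sset: "Sset = {i \<in> {1..r}. (\<exists>j\<in>G i. xbar $ j \<noteq> 0)}"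
    and S: "card Sset = S" "S \<ge> 1"
    and grec: "grec_phi p q G r A S S > 0"
    and K: "2 powr (of_int K - 1) * q \<ge> 1"
    and Kmin: "\<forall>k::int. 2 powr (of_int k - 1) * q \<ge> 1 \<longrightarrow> K \<le> k"
    and lam: "lambda > 0"
    and lev: "(norm (A *v xstar - A *v xbar))\<^sup>2 + lambda * mixnorm p q G xstar {1..r} powr q
              \<le> lambda * mixnorm p q G xbar {1..r} powr q"
    and T: "is_topN p G r xstar Sset S T"
  shows "((norm (A *v xstar - A *v xbar))\<^sup>2 + lambda * mixnorm p q G xstar ({1..r} - Sset) powr q
           \<le> lambda powr (2 / (2 - q)) * real S powr ((1 - 2 powr (- of_int K)) * (2 / (2 - q)))
             / grec_phi p q G r A S S powr (2 * q / (2 - q)))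
         \<and> ((mixnorm p 2 G (xstar - xbar) (Sset \<union> T))\<^sup>2
           \<le> lambda powr (2 / (2 - q)) * real S powr ((1 - 2 powr (- of_int K)) * (2 / (2 - q)))
             / grec_phi p q G r A S S powr (4 / (2 - q)))"
proof -
  let ?e = "(1 - 2 powr (- of_int K)) * (2 / (2 - q))"
  let ?phi = "grec_phi p q G r A S S"
  have "Sset \<subseteq> {1..r}" "\<And>i j. i \<in> {1..r} - Sset \<Longrightarrow> j \<in> G i \<Longrightarrow> xbar $ j = 0"
    using Sset by auto
  note sharp = level_set_error_bounds[OF this S p(1) q lam grec lev T]
  have "2 powr (- of_int K) \<le> q / 2"
    using K by (intro two_powr_neg_le_half_mult) simp
  then have "1 \<le> ?e"
    using q by (simp add: field_simps)
  then have "real S \<le> real S powr ?e"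
    using S powr_mono[of 1 ?e "real S"] by simp
  then have "lambda powr (2 / (2 - q)) * real S / ?phi powr a
      \<le> lambda powr (2 / (2 - q)) * real S powr ?e / ?phi powr a" for a
    using grec by (intro divide_right_mono mult_left_mono) auto
  then show ?thesis
    using sharp by (meson order_trans)
qed

end
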